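(* Let $n,N\in\mathbb N$, $I=\{1,\dots,n\}$, $J=\{1,\dots,N\}$, and let $a=(a_{ij})\in\mathbb R^{n\times N}$. Let $G$ be a nonempty finite set of maps from $I$ to $J$, and let $C_G>0$ be a constant depending only on $G$. Assume that for all $i\in I$, $j\in J$ and all pairs $(i_1,j_1)\neq(i_2,j_2)$ in $I\times J$: (i) $\mathbb P(\{g\in G: g(i)=j\})=1/N$; (ii) $\mathbb P(\{g\in G: g(i_1)=j_1,\ g(i_2)=j_2\})\le C_G/N^2$. Then for every integer $1\le \ell\le n$, $$\frac{c}{N}\sum_{j=1}^{\ell N}s(j)\;\le\;\int_G\sum_{k=1}^{\ell}\operatorname{k\text{-}max}_{1\le i\le n}|a_{i g(i)}|\,d\mathbb P(g)\;\le\;\frac{2}{N}\sum_{j=1}^{\ell N}s(j),$$ where $c=2^{-5}(1+2C_G)^{-2}$.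
   Context: $\mathbb P$ denotes the normalized counting measure on $G$, i.e. $\mathbb P(E)=|E|/|G|$ for $E\subseteq G$. $(s(k))_{k=1}^{nN}$ is the non-increasing rearrangement of the $nN$ numbers $(|a_{ij}|)_{i\in I,j\in J}$ (so $s(1)$ is the largest). For a vector $x\in\mathbb R^n$ with non-negative entries, $\operatorname{k\text{-}max}_{1\le i\le n}x_i$ denotes the $k$-th largest entry of $x$ counted with multiplicity, i.e. the $k$-th entry of the non-increasing rearrangement of $x$. *)

theory Defs
  imports Complex_Main "HOL-Library.FuncSet"
begin

definition Pc :: "'a set \<Rightarrow> 'a set \<Rightarrow> real" where
  "Pc G E = real (card E) / real (card G)"

definition avg :: "'a set \<Rightarrow> ('a \<Rightarrow> real) \<Rightarrow> real" where
  "avg G f = (\<Sum>g\<in>G. f g) / real (card G)"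

definition kth_largest :: "real list \<Rightarrow> nat \<Rightarrow> real" where
  "kth_largest xs k = rev (sort xs) ! (k - 1)"

definition kmax :: "nat \<Rightarrow> nat \<Rightarrow> (nat \<Rightarrow> real) \<Rightarrow> real" where
  "kmax k n x = kth_largest (map x [1..<n+1]) k"

definition srearr :: "nat \<Rightarrow> nat \<Rightarrow> (nat \<Rightarrow> nat \<Rightarrow> real) \<Rightarrow> nat \<Rightarrow> real" where
  "srearr n N a k = kth_largest (concat (map (\<lambda>i. map (\<lambda>j. \<bar>a i j\<bar>) [1..<N+1]) [1..<n+1])) k"

end

theory Submission
  imports Defs "HOL-Library.Multiset"
begin

text \<open>
  For a nonnegative vector x the sum of its l largest entries equals the minimum over t of
  l t + sum_i (x_i - t)^+, attained at the l-th largest entry, and it dominates sum_i c_i x_i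
  for all weights 0 <= c_i <= 1 of total mass at most l.

  Write T(g) for the integrand and S = sum_{j <= lN} s(j).
  Upper bound: insert the threshold t = s(lN) for every g. By (i) the average over G of
  sum_i (|a_{i g(i)}| - t)^+ is 1/N times the same sum over all of I x J, and the average
  of the whole bound collapses to S/N.

  Lower bound: let A be the positions of the lN largest entries, H(g) the number of points of A
  on the graph of g and Y(g) the sum of the entries there. The weights min(1, l/H) on these
  points give T(g) >= alpha Y - alpha^2 H Y / (4l) for every alpha in (0,1]. By (i) the
  average of Y is S/N, and by (ii) the average of H Y is at most (1 + lC) S/N; the choice
  alpha = 1/(1+C) yields the constant.
\<close>

section \<open>Sums of the largest entries\<close>

lemma sum_kth_largest_conv_nth:
  "(\<Sum>k=1..m. kth_largest xs k) = (\<Sum>k<m. rev (sort xs) ! k)"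
  by (induction m) (auto simp: kth_largest_def)

lemma rev_sort_nth_antimono:
  assumes "i \<le> j" "j < length xs"
  shows "rev (sort xs) ! j \<le> rev (sort (xs :: real list)) ! i"
  using assms by (simp add: rev_nth sorted_nth_mono)

lemma sum_list_map_rev_sort:
  "sum_list (map f (rev (sort (xs :: real list)))) = sum_list (map (f :: real \<Rightarrow> real) xs)"
  by (metis mset_map mset_rev mset_sort sum_mset_sum_list)

lemma sum_kth_largest_le_threshold:
  assumes "m \<le> length xs"
  shows "(\<Sum>k=1..m. kth_largest xs k) \<le> real m * t + sum_list (map (\<lambda>v. max 0 (v - t)) xs)"
proof -
  let ?ys = "rev (sort xs)" and ?f = "\<lambda>v. max 0 (v - t)"
  have "(\<Sum>k<m. ?ys ! k) \<le> (\<Sum>k<m. t + ?f (?ys ! k))"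
    by (intro sum_mono) auto
  also have "\<dots> = real m * t + (\<Sum>k<m. ?f (?ys ! k))"
    by (simp add: sum.distrib)
  also have "(\<Sum>k<m. ?f (?ys ! k)) \<le> (\<Sum>k<length xs. ?f (?ys ! k))"
    using assms by (intro sum_mono2) auto
  also have "\<dots> = sum_list (map ?f ?ys)"
    by (simp add: sum_list_sum_nth atLeast0LessThan)
  finally show ?thesis
    unfolding sum_kth_largest_conv_nth by (simp only: sum_list_map_rev_sort)
qed

lemma sum_kth_largest_eq_threshold:
  assumes "1 \<le> m" "m \<le> length xs"
  defines "t \<equiv> kth_largest xs m"
  shows "(\<Sum>k=1..m. kth_largest xs k) = real m * t + sum_list (map (\<lambda>v. max 0 (v - t)) xs)"
proof -
  let ?ys = "rev (sort xs)" and ?f = "\<lambda>v. max 0 (v - t)"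
  have t: "t = ?ys ! (m - 1)"
    by (simp add: t_def kth_largest_def)
  have "(\<Sum>k<m. ?ys ! k) = (\<Sum>k<m. t + ?f (?ys ! k))"
  proof (intro sum.cong refl)
    fix k assume "k \<in> {..<m}"
    then have "t \<le> ?ys ! k"
      unfolding t using assms by (intro rev_sort_nth_antimono) auto
    then show "?ys ! k = t + ?f (?ys ! k)" by simp
  qed
  also have "\<dots> = real m * t + (\<Sum>k<m. ?f (?ys ! k))"
    by (simp add: sum.distrib)
  also have "(\<Sum>k<m. ?f (?ys ! k)) = (\<Sum>k<length xs. ?f (?ys ! k))"
  proof (rule sum.mono_neutral_left)
    show "\<forall>k \<in> {..<length xs} - {..<m}. ?f (?ys ! k) = 0"
    proof
      fix k assume "k \<in> {..<length xs} - {..<m}"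
      then have "?ys ! k \<le> t"
        unfolding t using assms by (intro rev_sort_nth_antimono) auto
      then show "?f (?ys ! k) = 0" by simp
    qed
  qed (use assms in auto)
  also have "\<dots> = sum_list (map ?f ?ys)"
    by (simp add: sum_list_sum_nth atLeast0LessThan)
  finally show ?thesis
    unfolding sum_kth_largest_conv_nth by (simp only: sum_list_map_rev_sort)
qed

lemma kth_largest_nonneg:
  assumes "\<forall>v \<in> set xs. 0 \<le> v" "1 \<le> k" "k \<le> length xs"
  shows "0 \<le> kth_largest xs k"
proof -
  have "rev (sort xs) ! (k - 1) \<in> set (rev (sort xs))"
    using assms by (intro nth_mem) auto
  then show ?thesis
    using assms by (auto simp: kth_largest_def)
qed

lemma sum_kth_largest_attained:
  fixes w :: "'a \<Rightarrow> real"
  assumes "distinct ps" "m \<le> length ps"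
  obtains A where "A \<subseteq> set ps" "card A = m"
    "(\<Sum>p\<in>A. w p) = (\<Sum>k=1..m. kth_largest (map w ps) k)"
proof
  define qs where "qs = rev (sort_key w ps)"
  have "sort (map w ps) = map w (sort_key w ps)"
    by (rule properties_for_sort) (simp_all add: mset_map)
  then have qs: "distinct qs" "length qs = length ps" "map w qs = rev (sort (map w ps))"
    using assms by (simp_all add: qs_def rev_map)
  show "set (take m qs) \<subseteq> set ps"
    by (auto simp: qs_def dest: in_set_takeD)
  show "card (set (take m qs)) = m"
    using qs assms by (simp add: distinct_card)
  have "(\<Sum>p \<in> set (take m qs). w p) = sum_list (map w (take m qs))"
    using qs by (simp add: sum_list_distinct_conv_sum_set)
  also have "\<dots> = (\<Sum>k<m. map w qs ! k)"
    using assms qs by (simp add: sum_list_sum_nth atLeast0LessThan take_map[symmetric])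
  finally show "(\<Sum>p \<in> set (take m qs). w p) = (\<Sum>k=1..m. kth_largest (map w ps) k)"
    unfolding sum_kth_largest_conv_nth qs(3) .
qed

lemma sum_list_map_upt: "sum_list (map f (map x [1..<n+1])) = (\<Sum>i=1..n. f (x i))"
proof -
  have "sum_list (map f (map x [1..<n+1])) = sum (f \<circ> x) (set [1..<n+1])"
    by (simp add: sum_list_distinct_conv_sum_set)
  also have "set [1..<n+1] = {1..n}" by auto
  finally show ?thesis by simp
qed

lemma sum_kmax_le_threshold:
  assumes "l \<le> n"
  shows "(\<Sum>k=1..l. kmax k n x) \<le> real l * t + (\<Sum>i=1..n. max 0 (x i - t))"
  using sum_kth_largest_le_threshold[of l "map x [1..<n+1]" t] assms
  unfolding kmax_def sum_list_map_upt by simp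

lemma weighted_sum_le_sum_kmax:
  assumes "1 \<le> l" "l \<le> n" "\<And>i. i \<in> {1..n} \<Longrightarrow> 0 \<le> x i"
    and "\<And>i. i \<in> {1..n} \<Longrightarrow> 0 \<le> c i \<and> c i \<le> 1" "(\<Sum>i=1..n. c i) \<le> real l"
  shows "(\<Sum>i=1..n. c i * x i) \<le> (\<Sum>k=1..l. kmax k n x)"
proof -
  define t where "t = kth_largest (map x [1..<n+1]) l"
  have t: "0 \<le> t"
    unfolding t_def using assms by (intro kth_largest_nonneg) auto
  have "(\<Sum>i=1..n. c i * x i) \<le> (\<Sum>i=1..n. c i * t + max 0 (x i - t))"
  proof (intro sum_mono)
    fix i assume i: "i \<in> {1..n}"
    have "c i * x i \<le> c i * (t + max 0 (x i - t))"
      using assms(4)[OF i] by (intro mult_left_mono) auto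
    also have "\<dots> \<le> c i * t + max 0 (x i - t)"
      using assms(4)[OF i] by (simp add: algebra_simps mult_left_le_one_le)
    finally show "c i * x i \<le> c i * t + max 0 (x i - t)" .
  qed
  also have "\<dots> = (\<Sum>i=1..n. c i) * t + (\<Sum>i=1..n. max 0 (x i - t))"
    by (simp add: sum.distrib sum_distrib_right)
  also have "\<dots> \<le> real l * t + (\<Sum>i=1..n. max 0 (x i - t))"
    using assms(5) t by (simp add: mult_right_mono)
  also have "\<dots> = (\<Sum>k=1..l. kmax k n x)"
    using sum_kth_largest_eq_threshold[of l "map x [1..<n+1]"] assms
    unfolding kmax_def sum_list_map_upt t_def by simp
  finally show ?thesis .
qed

lemma srearr_conv_product:
  "srearr n N a k = kth_largest (map (\<lambda>p. \<bar>a (fst p) (snd p)\<bar>) (List.product [1..<n+1] [1..<N+1])) k"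
  unfolding srearr_def by (simp only: product_concat_map map_concat map_map comp_def prod.sel)

lemma product_upt_props:
  "distinct (List.product [1..<n+1] [1..<N+1])"
  "set (List.product [1..<n+1] [1..<N+1]) = {1..n} \<times> {1..N}"
  "length (List.product [1..<n+1] [1..<N+1]) = n * N"
  by (auto simp: distinct_product atLeastLessThanSuc_atLeastAtMost)

lemma sum_srearr_nonneg:
  assumes "m \<le> n * N"
  shows "0 \<le> (\<Sum>j=1..m. srearr n N a j)"
  unfolding srearr_conv_product
proof (intro sum_nonneg kth_largest_nonneg)
  fix k assume "k \<in> {1..m}"
  then show "1 \<le> k" "k \<le> length (map (\<lambda>p. \<bar>a (fst p) (snd p)\<bar>) (List.product [1..<n+1] [1..<N+1]))"
    using assms by (simp_all only: length_map product_upt_props) auto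
qed auto

lemma sum_srearr_eq_threshold:
  fixes a :: "nat \<Rightarrow> nat \<Rightarrow> real"
  assumes "1 \<le> m" "m \<le> n * N"
  defines "\<sigma> \<equiv> srearr n N a m"
  shows "(\<Sum>j=1..m. srearr n N a j) = real m * \<sigma> + (\<Sum>i=1..n. \<Sum>j=1..N. max 0 (\<bar>a i j\<bar> - \<sigma>))"
proof -
  let ?ps = "List.product [1..<n+1] [1..<N+1]" and ?w = "\<lambda>p. \<bar>a (fst p) (snd p)\<bar>"
  have "(\<Sum>j=1..m. srearr n N a j) = real m * \<sigma> + sum_list (map (\<lambda>v. max 0 (v - \<sigma>)) (map ?w ?ps))"
    unfolding srearr_conv_product \<sigma>_def
    by (rule sum_kth_largest_eq_threshold) (use assms in \<open>simp_all only: length_map product_upt_props(3)\<close>)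
  also have "sum_list (map (\<lambda>v. max 0 (v - \<sigma>)) (map ?w ?ps)) = (\<Sum>p \<in> {1..n} \<times> {1..N}. max 0 (?w p - \<sigma>))"
    using product_upt_props(1)[of n N]
    by (simp only: map_map comp_def sum_list_distinct_conv_sum_set product_upt_props(2))
  finally show ?thesis
    by (simp add: sum.cartesian_product split_def)
qed

lemma sum_srearr_attained:
  assumes "m \<le> n * N"
  obtains A where "A \<subseteq> {1..n} \<times> {1..N}" "card A = m"
    "(\<Sum>p\<in>A. \<bar>a (fst p) (snd p)\<bar>) = (\<Sum>j=1..m. srearr n N a j)"
proof -
  let ?ps = "List.product [1..<n+1] [1..<N+1]"
  have "distinct ?ps" "m \<le> length ?ps"
    using assms by (simp_all only: product_upt_props)
  then obtain A where A: "A \<subseteq> set ?ps" "card A = m"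
    "(\<Sum>p\<in>A. \<bar>a (fst p) (snd p)\<bar>) = (\<Sum>k=1..m. kth_largest (map (\<lambda>p. \<bar>a (fst p) (snd p)\<bar>) ?ps) k)"
    by (rule sum_kth_largest_attained)
  show ?thesis
  proof (rule that)
    show "A \<subseteq> {1..n} \<times> {1..N}"
      using A(1) by (simp only: product_upt_props(2))
  qed (simp_all only: A(2,3) srearr_conv_product)
qed

section \<open>Points of a set on the graph of a map\<close>

lemma quadratic_le_truncated_ratio:
  fixes H l \<alpha> :: real
  assumes "0 \<le> H" "0 < l" "0 < \<alpha>" "\<alpha> \<le> 1"
  shows "\<alpha> - \<alpha>\<^sup>2 * H / (4 * l) \<le> (if H \<le> l then 1 else l / H)"
proof (cases "H \<le> l")
  case True
  have "0 \<le> \<alpha>\<^sup>2 * H / (4 * l)"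
    using assms by simp
  with True assms(4) show ?thesis by simp
next
  case False
  have "(\<alpha> - \<alpha>\<^sup>2 * H / (4 * l)) * (4 * l * H) \<le> l / H * (4 * l * H)"
  proof -
    have "(\<alpha> - \<alpha>\<^sup>2 * H / (4 * l)) * (4 * l * H) = 4 * l\<^sup>2 - (2 * l - \<alpha> * H)\<^sup>2"
      using assms by (simp add: field_simps power2_eq_square)
    also have "\<dots> \<le> 4 * l\<^sup>2"
      by simp
    also have "\<dots> = l / H * (4 * l * H)"
      using False assms by (simp add: field_simps power2_eq_square)
    finally show ?thesis .
  qed
  then have "\<alpha> - \<alpha>\<^sup>2 * H / (4 * l) \<le> l / H"
    by (rule mult_right_le_imp_le) (use False assms in simp)
  with False show ?thesis by simp
qed

lemma spread_constant_le:
  fixes C l :: real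
  assumes "0 < C" "1 \<le> l"
  shows "1 / (2^5 * (1 + 2 * C)\<^sup>2) \<le> 1 / (1 + C) - (1 / (1 + C))\<^sup>2 * (1 + l * C) / (4 * l)"
proof -
  define \<alpha> where "\<alpha> = 1 / (1 + C)"
  have "(1 + l * C) / (4 * l) \<le> (1 + C) / 4"
    using assms by (simp add: field_simps)
  then have "\<alpha>\<^sup>2 * ((1 + l * C) / (4 * l)) \<le> \<alpha>\<^sup>2 * ((1 + C) / 4)"
    by (intro mult_left_mono) auto
  also have "\<dots> = \<alpha> / 4"
    using assms by (simp add: \<alpha>_def power2_eq_square)
  finally have "3 / 4 * \<alpha> \<le> \<alpha> - \<alpha>\<^sup>2 * (1 + l * C) / (4 * l)"
    by simp
  moreover have "1 / (2^5 * (1 + 2 * C)\<^sup>2) \<le> 3 / 4 * \<alpha>"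
  proof -
    have "1 + C \<le> 24 * (1 + 2 * C)\<^sup>2"
      using assms by (simp add: power2_eq_square algebra_simps)
    then show ?thesis
      using assms by (simp add: \<alpha>_def field_simps)
  qed
  ultimately show ?thesis
    by (simp add: \<alpha>_def)
qed

definition hit :: "('a \<Rightarrow> 'b) \<Rightarrow> 'a \<times> 'b \<Rightarrow> real" where
  "hit g p = (if g (fst p) = snd p then 1 else 0)"

lemma hit_nonneg: "0 \<le> hit g p"
  and hit_idem: "hit g p * hit g p = hit g p"
  and hit_mult: "hit g p * x = (if g (fst p) = snd p then x else 0)"
  by (simp_all add: hit_def)

lemma sum_graph_conv_sum_hit:
  assumes "A \<subseteq> I \<times> UNIV" "finite A" "finite I"
  shows "(\<Sum>i\<in>I. if (i, g i) \<in> A then F (i, g i) else 0) = (\<Sum>p\<in>A. hit g p * F p)"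
proof -
  have "(\<Sum>p\<in>A. hit g p * F p) = (\<Sum>p\<in>A. if g (fst p) = snd p then F p else 0)"
    by (simp only: hit_mult)
  also have "\<dots> = (\<Sum>p \<in> {p\<in>A. g (fst p) = snd p}. F p)"
    using assms by (simp add: sum.inter_filter)
  also have "{p\<in>A. g (fst p) = snd p} = (\<lambda>i. (i, g i)) ` {i\<in>I. (i, g i) \<in> A}"
    using assms(1) by force
  also have "(\<Sum>p \<in> (\<lambda>i. (i, g i)) ` {i\<in>I. (i, g i) \<in> A}. F p) = (\<Sum>i \<in> {i\<in>I. (i, g i) \<in> A}. F (i, g i))"
    by (rule sum.reindex_cong[where l = "\<lambda>i. (i, g i)"]) (auto simp: inj_on_def)
  also have "\<dots> = (\<Sum>i\<in>I. if (i, g i) \<in> A then F (i, g i) else 0)"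
    using assms by (simp add: sum.inter_filter)
  finally show ?thesis ..
qed

lemma sum_kmax_ge_graph_hits:
  fixes x :: "nat \<Rightarrow> 'b \<Rightarrow> real" and g :: "nat \<Rightarrow> 'b"
  assumes "1 \<le> l" "l \<le> n" "A \<subseteq> {1..n} \<times> UNIV" "finite A"
    and "0 < \<alpha>" "\<alpha> \<le> 1" "\<And>i j. 0 \<le> x i j"
  defines "H \<equiv> \<Sum>q\<in>A. hit g q"
    and "Y \<equiv> \<Sum>p\<in>A. hit g p * x (fst p) (snd p)"
  shows "\<alpha> * Y - \<alpha>\<^sup>2 / (4 * real l) * (H * Y) \<le> (\<Sum>k=1..l. kmax k n (\<lambda>i. x i (g i)))"
proof -
  have H: "0 \<le> H" and Y: "0 \<le> Y"
    unfolding H_def Y_def using assms(7) by (auto intro!: sum_nonneg simp: hit_nonneg)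
  \<comment> \<open>this is min 1 (l / H), written so that H = 0 needs no care (l / 0 = 0 in HOL)\<close>
  define \<beta> where "\<beta> = (if H \<le> real l then 1 else real l / H)"
  have \<beta>: "0 \<le> \<beta>" "\<beta> \<le> 1" "\<beta> * H \<le> real l"
    using H assms(1) by (auto simp: \<beta>_def)
  define c where "c i = (if (i, g i) \<in> A then \<beta> else 0)" for i
  have graph_sum: "(\<Sum>i=1..n. if (i, g i) \<in> A then F (i, g i) else 0) = (\<Sum>p\<in>A. hit g p * F p)"
    for F :: "nat \<times> 'b \<Rightarrow> real"
    using assms(3,4) by (rule sum_graph_conv_sum_hit) simp
  have "(\<Sum>i=1..n. c i) = \<beta> * H"
    using graph_sum[of "\<lambda>_. \<beta>"] by (simp add: c_def H_def sum_distrib_left mult.commute)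
  then have "(\<Sum>i=1..n. c i * x i (g i)) \<le> (\<Sum>k=1..l. kmax k n (\<lambda>i. x i (g i)))"
    using assms(1,2,7) \<beta> by (intro weighted_sum_le_sum_kmax) (auto simp: c_def)
  moreover have "(\<Sum>i=1..n. c i * x i (g i)) = \<beta> * Y"
  proof -
    have "(\<Sum>i=1..n. c i * x i (g i)) = (\<Sum>i=1..n. if (i, g i) \<in> A then \<beta> * x i (g i) else 0)"
      by (intro sum.cong) (simp_all add: c_def)
    also have "\<dots> = (\<Sum>p\<in>A. hit g p * (\<beta> * x (fst p) (snd p)))"
      by (subst graph_sum[symmetric]) (simp cong: if_cong)
    finally show ?thesis
      by (simp add: Y_def sum_distrib_left algebra_simps)
  qed
  moreover have "(\<alpha> - \<alpha>\<^sup>2 * H / (4 * real l)) * Y \<le> \<beta> * Y"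
    using quadratic_le_truncated_ratio[of H "real l" \<alpha>] H Y assms(1,5,6)
    by (intro mult_right_mono) (auto simp: \<beta>_def)
  ultimately show ?thesis
    by (simp add: algebra_simps)
qed

section \<open>Averaging over a spread family of maps\<close>

locale spread_family =
  fixes n N :: nat and G :: "(nat \<Rightarrow> nat) set" and C :: real
  assumes maps: "G \<subseteq> {1..n} \<rightarrow>\<^sub>E {1..N}"
    and nonempty: "G \<noteq> {}"
    and single: "\<And>i j. i \<in> {1..n} \<Longrightarrow> j \<in> {1..N} \<Longrightarrow> Pc G {g \<in> G. g i = j} = 1 / real N"
    and pair: "\<And>i1 j1 i2 j2. i1 \<in> {1..n} \<Longrightarrow> j1 \<in> {1..N} \<Longrightarrow>
                 i2 \<in> {1..n} \<Longrightarrow> j2 \<in> {1..N} \<Longrightarrow> (i1, j1) \<noteq> (i2, j2) \<Longrightarrow>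
                 Pc G {g \<in> G. g i1 = j1 \<and> g i2 = j2} \<le> C / (real N)\<^sup>2"
begin

lemma finite_G: "finite G"
  using maps by (rule finite_subset) (simp add: finite_PiE)

lemma card_G_pos: "0 < card G"
  using finite_G nonempty by (simp add: card_gt_0_iff)

lemma map_into: "g \<in> G \<Longrightarrow> i \<in> {1..n} \<Longrightarrow> g i \<in> {1..N}"
  using maps by (auto simp: PiE_def Pi_def)

lemma N_pos: "1 \<le> n \<Longrightarrow> 0 < N"
  using nonempty map_into[of _ 1] by fastforce

lemma sum_hit:
  assumes "p \<in> {1..n} \<times> {1..N}"
  shows "(\<Sum>g\<in>G. hit g p) = card G / N"
proof -
  have "(\<Sum>g\<in>G. hit g p) = card {g\<in>G. g (fst p) = snd p}"
    using finite_G by (simp add: hit_def sum.If_cases Int_def)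
  moreover have "card {g\<in>G. g (fst p) = snd p} / card G = 1 / N"
    using single[of "fst p" "snd p"] assms by (auto simp: Pc_def)
  ultimately show ?thesis
    using card_G_pos by (auto simp: field_simps)
qed

lemma sum_hit_pair:
  assumes "p \<in> {1..n} \<times> {1..N}" "q \<in> {1..n} \<times> {1..N}" "p \<noteq> q"
  shows "(\<Sum>g\<in>G. hit g p * hit g q) \<le> C * card G / N\<^sup>2"
proof -
  have "hit g p * hit g q = (if g (fst p) = snd p \<and> g (fst q) = snd q then 1 else 0)" for g
    by (simp add: hit_def)
  then have "(\<Sum>g\<in>G. hit g p * hit g q) = card {g\<in>G. g (fst p) = snd p \<and> g (fst q) = snd q}"
    using finite_G by (simp add: sum.If_cases Int_def)
  moreover have "card {g\<in>G. g (fst p) = snd p \<and> g (fst q) = snd q} / card G \<le> C / N\<^sup>2"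
    using pair[of "fst p" "snd p" "fst q" "snd q"] assms by (auto simp: Pc_def prod_eq_iff)
  ultimately show ?thesis
    using card_G_pos by (simp add: field_simps)
qed

lemma sum_comp_eval:
  assumes "i \<in> {1..n}"
  shows "(\<Sum>g\<in>G. h (g i)) = card G / N * (\<Sum>j=1..N. h j)"
proof -
  have "(\<Sum>g\<in>G. h (g i)) = (\<Sum>g\<in>G. \<Sum>j=1..N. hit g (i, j) * h j)"
  proof (intro sum.cong refl)
    fix g assume "g \<in> G"
    then have "g i \<in> {1..N}" using assms by (rule map_into)
    then show "h (g i) = (\<Sum>j=1..N. hit g (i, j) * h j)"
      by (simp add: hit_mult)
  qed
  also have "\<dots> = (\<Sum>j=1..N. (\<Sum>g\<in>G. hit g (i, j)) * h j)"
    by (subst sum.swap) (simp add: sum_distrib_right)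
  also have "\<dots> = (\<Sum>j=1..N. card G / N * h j)"
    using assms by (intro sum.cong refl) (simp add: sum_hit)
  finally show ?thesis
    by (simp add: sum_distrib_left)
qed

lemma sum_top_kmax_le:
  fixes a :: "nat \<Rightarrow> nat \<Rightarrow> real"
  assumes "1 \<le> l" "l \<le> n"
  shows "(\<Sum>g\<in>G. \<Sum>k=1..l. kmax k n (\<lambda>i. \<bar>a i (g i)\<bar>)) \<le> card G / N * (\<Sum>j=1..l*N. srearr n N a j)"
proof -
  have N: "0 < N" using assms N_pos by simp
  define \<sigma> where "\<sigma> = srearr n N a (l * N)"
  define E where "E = (\<Sum>i=1..n. \<Sum>j=1..N. max 0 (\<bar>a i j\<bar> - \<sigma>))"
  have S: "(\<Sum>j=1..l*N. srearr n N a j) = real (l * N) * \<sigma> + E"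
    unfolding \<sigma>_def E_def using assms N by (intro sum_srearr_eq_threshold) auto
  have "(\<Sum>g\<in>G. \<Sum>k=1..l. kmax k n (\<lambda>i. \<bar>a i (g i)\<bar>))
      \<le> (\<Sum>g\<in>G. real l * \<sigma> + (\<Sum>i=1..n. max 0 (\<bar>a i (g i)\<bar> - \<sigma>)))"
    using assms by (intro sum_mono sum_kmax_le_threshold) auto
  also have "\<dots> = card G * (real l * \<sigma>) + (\<Sum>i=1..n. \<Sum>g\<in>G. max 0 (\<bar>a i (g i)\<bar> - \<sigma>))"
    by (simp add: sum.distrib sum.swap[of _ G])
  also have "(\<Sum>i=1..n. \<Sum>g\<in>G. max 0 (\<bar>a i (g i)\<bar> - \<sigma>))
      = (\<Sum>i=1..n. card G / N * (\<Sum>j=1..N. max 0 (\<bar>a i j\<bar> - \<sigma>)))"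
    by (intro sum.cong refl) (rule sum_comp_eval)
  also have "\<dots> = card G / N * E"
    by (simp add: E_def sum_distrib_left)
  also have "card G * (real l * \<sigma>) + card G / N * E = card G / N * (\<Sum>j=1..l*N. srearr n N a j)"
    unfolding S using N by (simp add: field_simps)
  finally show ?thesis .
qed

lemma sum_hit_weights:
  assumes "A \<subseteq> {1..n} \<times> {1..N}"
  shows "(\<Sum>g\<in>G. \<Sum>p\<in>A. hit g p * w p) = card G / N * (\<Sum>p\<in>A. w p)"
proof -
  have "(\<Sum>g\<in>G. \<Sum>p\<in>A. hit g p * w p) = (\<Sum>p\<in>A. (\<Sum>g\<in>G. hit g p) * w p)"
    by (subst sum.swap) (simp add: sum_distrib_right)
  also have "\<dots> = (\<Sum>p\<in>A. card G / N * w p)"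
    using assms by (intro sum.cong refl) (auto simp: sum_hit)
  finally show ?thesis
    by (simp add: sum_distrib_left)
qed

lemma sum_hit_pair_weights:
  assumes "A \<subseteq> {1..n} \<times> {1..N}" "0 \<le> C" "\<And>p. 0 \<le> w p"
  shows "(\<Sum>g\<in>G. (\<Sum>q\<in>A. hit g q) * (\<Sum>p\<in>A. hit g p * w p))
    \<le> card G / N * (1 + card A * C / N) * (\<Sum>p\<in>A. w p)"
proof -
  have finA: "finite A"
    using assms(1) by (rule finite_subset) simp
  have row: "(\<Sum>q\<in>A. \<Sum>g\<in>G. hit g p * hit g q) \<le> card G / N * (1 + card A * C / N)"
    if p: "p \<in> A" for p
  proof -
    have N: "0 < N"
      using p assms(1) by auto
    have "(\<Sum>q\<in>A. \<Sum>g\<in>G. hit g p * hit g q)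
        = (\<Sum>g\<in>G. hit g p * hit g p) + (\<Sum>q\<in>A - {p}. \<Sum>g\<in>G. hit g p * hit g q)"
      using finA p by (simp add: sum.remove)
    also have "(\<Sum>g\<in>G. hit g p * hit g p) = card G / N"
      using p assms(1) by (auto simp: hit_idem sum_hit)
    also have "(\<Sum>q\<in>A - {p}. \<Sum>g\<in>G. hit g p * hit g q) \<le> card (A - {p}) * (C * card G / N\<^sup>2)"
      using p assms(1) by (intro sum_bounded_above sum_hit_pair) auto
    also have "\<dots> \<le> card A * (C * card G / N\<^sup>2)"
      using finA assms(2) by (intro mult_right_mono) (auto simp: card_Diff_subset_Int)
    finally show ?thesis
      using N by (simp add: field_simps power2_eq_square)
  qed
  have "(\<Sum>g\<in>G. (\<Sum>q\<in>A. hit g q) * (\<Sum>p\<in>A. hit g p * w p))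
      = (\<Sum>p\<in>A. w p * (\<Sum>q\<in>A. \<Sum>g\<in>G. hit g p * hit g q))"
  proof -
    have "(\<Sum>g\<in>G. (\<Sum>q\<in>A. hit g q) * (\<Sum>p\<in>A. hit g p * w p))
        = (\<Sum>g\<in>G. \<Sum>q\<in>A. \<Sum>p\<in>A. hit g q * (hit g p * w p))"
      by (simp only: sum_product)
    also have "\<dots> = (\<Sum>q\<in>A. \<Sum>g\<in>G. \<Sum>p\<in>A. hit g q * (hit g p * w p))"
      by (rule sum.swap)
    also have "\<dots> = (\<Sum>q\<in>A. \<Sum>p\<in>A. \<Sum>g\<in>G. hit g q * (hit g p * w p))"
      by (intro sum.cong refl) (rule sum.swap)
    also have "\<dots> = (\<Sum>p\<in>A. \<Sum>q\<in>A. \<Sum>g\<in>G. hit g q * (hit g p * w p))"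
      by (rule sum.swap)
    finally show ?thesis
      by (simp add: sum_distrib_left mult_ac)
  qed
  also have "\<dots> \<le> (\<Sum>p\<in>A. w p * (card G / N * (1 + card A * C / N)))"
    using assms(3) by (intro sum_mono mult_left_mono row)
  also have "\<dots> = card G / N * (1 + card A * C / N) * (\<Sum>p\<in>A. w p)"
    by (metis mult.commute sum_distrib_right)
  finally show ?thesis .
qed

lemma sum_top_kmax_ge:
  fixes a :: "nat \<Rightarrow> nat \<Rightarrow> real"
  assumes "0 < C" "1 \<le> l" "l \<le> n"
  shows "card G / N * (1 / (2^5 * (1 + 2 * C)\<^sup>2)) * (\<Sum>j=1..l*N. srearr n N a j)
    \<le> (\<Sum>g\<in>G. \<Sum>k=1..l. kmax k n (\<lambda>i. \<bar>a i (g i)\<bar>))"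
proof -
  have N: "0 < N" using assms N_pos by simp
  define S where "S = (\<Sum>j=1..l*N. srearr n N a j)"
  define w where "w p = \<bar>a (fst p) (snd p)\<bar>" for p
  have "l * N \<le> n * N" using assms by simp
  then obtain A where A: "A \<subseteq> {1..n} \<times> {1..N}" "card A = l * N" "(\<Sum>p\<in>A. w p) = S"
    unfolding S_def w_def by (rule sum_srearr_attained)
  have S: "0 \<le> S"
    unfolding S_def using \<open>l * N \<le> n * N\<close> by (rule sum_srearr_nonneg)
  define \<alpha> where "\<alpha> = 1 / (1 + C)"
  define H where "H g = (\<Sum>q\<in>A. hit g q)" for g
  define Y where "Y g = (\<Sum>p\<in>A. hit g p * w p)" for g
  define X where "X = card G / N * S"
  have "card G / N * (1 / (2^5 * (1 + 2 * C)\<^sup>2)) * S = X * (1 / (2^5 * (1 + 2 * C)\<^sup>2))"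
    by (simp add: X_def)
  also have "\<dots> \<le> X * (\<alpha> - \<alpha>\<^sup>2 * (1 + l * C) / (4 * real l))"
    unfolding \<alpha>_def X_def using assms S by (intro mult_left_mono spread_constant_le) auto
  also have "\<dots> = \<alpha> * X - \<alpha>\<^sup>2 / (4 * real l) * ((1 + l * C) * X)"
    by (simp add: algebra_simps)
  also have "\<dots> \<le> \<alpha> * X - \<alpha>\<^sup>2 / (4 * real l) * (\<Sum>g\<in>G. H g * Y g)"
  proof -
    have "(\<Sum>g\<in>G. H g * Y g) \<le> (1 + l * C) * X"
      using sum_hit_pair_weights[OF A(1), of w] assms(1) N
      unfolding H_def Y_def X_def A(2,3) by (simp add: w_def mult_ac)
    then have "\<alpha>\<^sup>2 / (4 * real l) * (\<Sum>g\<in>G. H g * Y g) \<le> \<alpha>\<^sup>2 / (4 * real l) * ((1 + l * C) * X)"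
      by (rule mult_left_mono) simp
    then show ?thesis
      by linarith
  qed
  also have "\<dots> = (\<Sum>g\<in>G. \<alpha> * Y g - \<alpha>\<^sup>2 / (4 * real l) * (H g * Y g))"
    unfolding sum_subtractf sum_distrib_left[symmetric] Y_def sum_hit_weights[OF A(1)] A(3) X_def ..
  also have "\<dots> \<le> (\<Sum>g\<in>G. \<Sum>k=1..l. kmax k n (\<lambda>i. \<bar>a i (g i)\<bar>))"
    unfolding H_def Y_def w_def using A(1) assms
    by (intro sum_mono sum_kmax_ge_graph_hits) (auto simp: \<alpha>_def finite_subset)
  finally show ?thesis
    unfolding S_def .
qed

end

theorem theorem1p1:
  fixes n N :: nat and a :: "nat \<Rightarrow> nat \<Rightarrow> real"
    and G :: "(nat \<Rightarrow> nat) set" and C :: real and l :: nat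
  assumes G_maps: "G \<subseteq> {1..n} \<rightarrow>\<^sub>E {1..N}"
    and G_ne: "G \<noteq> {}"
    and C_pos: "C > 0"
    and cond1: "\<And>i j. i \<in> {1..n} \<Longrightarrow> j \<in> {1..N} \<Longrightarrow>
                 Pc G {g \<in> G. g i = j} = 1 / real N"
    and cond2: "\<And>i1 j1 i2 j2. i1 \<in> {1..n} \<Longrightarrow> j1 \<in> {1..N} \<Longrightarrow>
                 i2 \<in> {1..n} \<Longrightarrow> j2 \<in> {1..N} \<Longrightarrow> (i1, j1) \<noteq> (i2, j2) \<Longrightarrow>
                 Pc G {g \<in> G. g i1 = j1 \<and> g i2 = j2} \<le> C / (real N)^2"
    and l_range: "1 \<le> l" "l \<le> n"
  shows "(1 / (2^5 * (1 + 2 * C)^2)) / real N * (\<Sum>j=1..l*N. srearr n N a j)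
           \<le> avg G (\<lambda>g. \<Sum>k=1..l. kmax k n (\<lambda>i. \<bar>a i (g i)\<bar>))
       \<and> avg G (\<lambda>g. \<Sum>k=1..l. kmax k n (\<lambda>i. \<bar>a i (g i)\<bar>))
           \<le> 2 / real N * (\<Sum>j=1..l*N. srearr n N a j)"
proof -
  interpret spread_family n N G C
    using G_maps G_ne cond1 cond2 by unfold_locales
  define S where "S = (\<Sum>j=1..l*N. srearr n N a j)"
  define T where "T = (\<Sum>g\<in>G. \<Sum>k=1..l. kmax k n (\<lambda>i. \<bar>a i (g i)\<bar>))"
  have avg: "avg G (\<lambda>g. \<Sum>k=1..l. kmax k n (\<lambda>i. \<bar>a i (g i)\<bar>)) = T / card G"
    by (simp add: avg_def T_def)
  have N: "0 < N" and K: "0 < card G"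
    using l_range by (simp_all add: N_pos card_G_pos)
  have S: "0 \<le> S"
    unfolding S_def using l_range by (intro sum_srearr_nonneg) simp
  have "card G / N * (1 / (2^5 * (1 + 2 * C)\<^sup>2)) * S \<le> T"
    unfolding S_def T_def using C_pos l_range by (rule sum_top_kmax_ge)
  moreover have "T \<le> card G / N * S"
    unfolding S_def T_def using l_range by (rule sum_top_kmax_le)
  moreover have "0 \<le> S * card G"
    using S by simp
  ultimately show ?thesis
    unfolding avg S_def[symmetric] using N K by (auto simp: field_simps)
qed

end
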